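(* Consider the stochastic primal-dual hybrid gradient (SPDHG) method described in the context, run with step-sizes $\beta^{k+1} = \frac{1}{\sqrt{k+1}+L}$ and uniform averaging weights $\alpha^{k+1} = \frac{1}{t+1}$, $k=0,\dots,t$. Let $(y^*,x^* )$ be any saddle point of $\min_{x\in\mathcal{X}}\max_{y\in\mathcal{Y}} P(y,x)$. Then for every $t\ge 0$, $$0\le \mathbb{E}\left[P(y^*,\bar{x}^t) - P(\bar{y}^t,x^* )\right] \le \frac{D_y^2}{2s(t+1)} + \frac{L D_x^2}{2(t+1)} + \frac{D_x^2+2\lambda_{\max}(F^\top F)D_y^2+2\sigma^2}{\sqrt{t+1}},$$ i.e. $(\bar y^t,\bar x^t)$ converges to the saddle point at rate $O(1/\sqrt{t})$ in expectation.
   Context: Setting: $\mathcal{X}\subset\mathbb{R}^d$ is a nonempty convex compact set with diameter $D_x$ (so $\|x-x'\|\le D_x$ for all $x,x'\in\mathcal{X}$), $\mathcal{Y}\subset\mathbb{R}^l$ is a nonempty convex compact set with diameter $D_y$, $F\in\mathbb{R}^{l\times d}$, and $\lambda_{\max}(F^\top F)$ denotes the largest eigenvalue of $F^\top F$. The regularizer is $r(z)=\max_{y\in\mathcal{Y}}\langle y,z\rangle$. The loss is $l(x)=\mathbb{E}_\xi[l(x,\xi)]$, a convex, continuously differentiable function on $\mathcal{X}$ with $L$-Lipschitz gradient: $\|\nabla l(x_1)-\nabla l(x_2)\|\le L\|x_1-x_2\|$ for all $x_1,x_2\in\mathcal{X}$. The stochastic gradient $\nabla l(x,\xi)$ satisfies,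 for every $x\in\mathcal{X}$: $\mathbb{E}[\nabla l(x,\xi)]=\nabla l(x)$, $\mathbb{E}\|\nabla l(x,\xi)-\nabla l(x)\|^2\le\sigma^2$, and $\mathbb{E}\exp\left(\|\nabla l(x,\xi)-\nabla l(x)\|^2/\sigma^2\right)\le \exp(1)$, for a constant $\sigma>0$. The saddle function is $P(y,x)=l(x)+\langle y,Fx\rangle$ for $x\in\mathcal{X},y\in\mathcal{Y}$; a saddle point $(y^*,x^* )$ satisfies $P(y,x^* )\le P(y^*,x^* )\le P(y^*,x)$ for all $(y,x)\in\mathcal{Y}\times\mathcal{X}$ (assumed to exist). SPDHG: fix $s>0$, $x^0\in\mathcal{X}$, $y^0\in\mathcal{Y}$, and a sequence of step-sizes $\beta^{k+1}>0$. For $k=0,1,2,\dots$, draw a sample $\xi^{k+1}$ independently of the past (i.i.d. samples), and set $$y^{k+1}=\arg\max_{y\in\mathcal{Y}}\Big\{P(y,x^k)-\tfrac{1}{2s}\|y-y^k\|^2\Big\},\qquad x^{k+1}=\Pi_{\mathcal{X}}\Big[x^k-\beta^{k+1}\big(\nabla l(x^k,\xi^{k+1})+F^\top y^{k+1}\big)\Big],$$ where $\Pi_{\mathcal{X}}$ is Euclidean projection onto $\mathcal{X}$. Given weights $\alpha^{k+1}\ge0$ with $\sum_{k=0}^t\alpha^{k+1}=1$, the output after $t$ steps is $\bar x^t=\sum_{k=0}^t\alpha^{k+1}x^{k+1}$, $\bar y^t=\sum_{k=0}^t\alpha^{k+1}y^{k+1}$. *)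

theory Defs
  imports "HOL-Analysis.Analysis" "HOL-Probability.Probability"
begin

definition Psaddle :: "(real^'n \<Rightarrow> real) \<Rightarrow> real^'n^'m \<Rightarrow> real^'m \<Rightarrow> real^'n \<Rightarrow> real" where
  "Psaddle l F y x = l x + inner y (F *v x)"

definition is_saddle_point ::
  "'a set \<Rightarrow> 'b set \<Rightarrow> ('a \<Rightarrow> 'b \<Rightarrow> real) \<Rightarrow> 'a \<Rightarrow> 'b \<Rightarrow> bool" where
  "is_saddle_point Y X P ys xs \<longleftrightarrow> ys \<in> Y \<and> xs \<in> X \<and>
     (\<forall>y\<in>Y. P y xs \<le> P ys xs) \<and> (\<forall>x\<in>X. P ys xs \<le> P ys x)"

definition lambda_max :: "real^'n^'n \<Rightarrow> real" where
  "lambda_max A = Max {\<mu>. \<exists>v. v \<noteq> 0 \<and> A *v v = \<mu> *\<^sub>R v}"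

end

theory Submission
  imports Defs
begin

(* One SPDHG step is a pair of Euclidean projections. The three-point inequality for
   projections, the descent lemma and the gradient inequality of the convex L-smooth loss,
   and Young's inequality with parameter r = sqrt (k + 1) bound P(ys, x_(k+1)) - P(y_(k+1), xs)
   by differences of squared distances to the saddle point (ys, xs), which telescope, plus
   the noise terms (|d_k|^2 + lambda_max D_y^2) / r - <d_k, x_k - xs>, where d_k is the error
   of the stochastic gradient at x_k. Since P(ys, -) is convex and P(-, xs) is affine, the
   same bound holds for the averages; the telescoping sums are at most D_x^2 and D_y^2, and
   sum_k 1 / sqrt (k + 1) <= 2 sqrt (t + 1). Finally x_k is a measurable function of
   xi_1, ..., xi_k and hence independent of xi_(k+1), so d_k has mean zero given x_k and
   second moment at most sigma^2. *)

section \<open>Smooth convex functions\<close>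

lemma convex_segment_point:
  fixes a b :: "'a::real_vector"
  assumes "convex S" "a \<in> S" "b \<in> S" "0 \<le> \<theta>" "\<theta> \<le> 1"
  shows "a + \<theta> *\<^sub>R (b - a) \<in> S"
proof -
  have "a + \<theta> *\<^sub>R (b - a) = (1 - \<theta>) *\<^sub>R a + \<theta> *\<^sub>R b" by (simp add: algebra_simps)
  thus ?thesis using convexD_alt[OF assms] by simp
qed

lemma has_derivative_along_segment:
  fixes f :: "'a::real_inner \<Rightarrow> real"
  assumes f': "\<And>z. z \<in> S \<Longrightarrow> (f has_derivative (\<lambda>h. inner (f' z) h)) (at z within S)"
    and S: "convex S" "a \<in> S" "b \<in> S" and \<theta>: "0 \<le> \<theta>" "\<theta> \<le> 1"
  shows "((\<lambda>\<theta>. f (a + \<theta> *\<^sub>R (b - a))) has_derivative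
           (\<lambda>h. h * inner (f' (a + \<theta> *\<^sub>R (b - a))) (b - a))) (at \<theta> within {0..1})"
proof -
  let ?p = "\<lambda>\<theta>. a + \<theta> *\<^sub>R (b - a)"
  have p: "(?p has_derivative (\<lambda>h. h *\<^sub>R (b - a))) (at \<theta> within {0..1})"
    by (auto intro!: derivative_eq_intros)
  have "?p ` {0..1} \<subseteq> S" using convex_segment_point[OF S] by auto
  then have "(f has_derivative (\<lambda>h. inner (f' (?p \<theta>)) h)) (at (?p \<theta>) within ?p ` {0..1})"
    by (rule has_derivative_subset[OF f'[OF convex_segment_point[OF S \<theta>]]])
  from has_derivative_in_compose[OF p this] show ?thesis by simp
qed

lemma lipschitz_gradient_upper_bound:
  fixes f :: "'a::real_inner \<Rightarrow> real"
  assumes f': "\<And>z. z \<in> S \<Longrightarrow> (f has_derivative (\<lambda>h. inner (f' z) h)) (at z within S)"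
    and lip: "\<And>z w. z \<in> S \<Longrightarrow> w \<in> S \<Longrightarrow> norm (f' z - f' w) \<le> L * norm (z - w)"
    and S: "convex S" "a \<in> S" "b \<in> S"
  shows "f b \<le> f a + inner (f' a) (b - a) + L / 2 * (norm (b - a))\<^sup>2"
proof -
  define g where "g = (\<lambda>\<theta>. f (a + \<theta> *\<^sub>R (b - a)) - \<theta> * inner (f' a) (b - a) - L / 2 * \<theta>\<^sup>2 * (norm (b - a))\<^sup>2)"
  define g' where "g' = (\<lambda>\<theta> h. h * inner (f' (a + \<theta> *\<^sub>R (b - a))) (b - a) - h * inner (f' a) (b - a)
                               - L / 2 * (2 * \<theta> * h) * (norm (b - a))\<^sup>2)"
  \<comment> \<open>Mean value theorem for \<open>f\<close> minus its quadratic upper model along the segment.\<close>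
  have "\<exists>\<theta>\<in>{0..1}. g 1 - g 0 = g' \<theta> (1 - 0)"
  proof (rule mvt_very_simple)
    fix \<theta> :: real assume \<theta>: "0 \<le> \<theta>" "\<theta> \<le> 1"
    show "(g has_derivative g' \<theta>) (at \<theta> within {0..1})"
      unfolding g_def g'_def
      by (rule derivative_eq_intros has_derivative_along_segment[OF f' S \<theta>] refl
          | simp add: fun_eq_iff algebra_simps)+
  qed simp
  then obtain \<theta> where \<theta>: "0 \<le> \<theta>" "\<theta> \<le> 1" and eq: "g 1 - g 0 = g' \<theta> 1" by auto
  let ?z = "a + \<theta> *\<^sub>R (b - a)"
  have "inner (f' ?z - f' a) (b - a) \<le> norm (f' ?z - f' a) * norm (b - a)"
    by (rule norm_cauchy_schwarz)
  also have "\<dots> \<le> L * norm (?z - a) * norm (b - a)"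
    using lip[OF convex_segment_point[OF S \<theta>] S(2)] by (simp add: mult_right_mono)
  also have "\<dots> = L * \<theta> * (norm (b - a))\<^sup>2" using \<theta> by (simp add: power2_eq_square)
  finally have "g' \<theta> 1 \<le> 0" unfolding g'_def by (simp add: inner_diff_left)
  with eq show ?thesis unfolding g_def by simp
qed

lemma convex_on_gradient_lower_bound:
  fixes f :: "'a::real_inner \<Rightarrow> real"
  assumes f': "\<And>z. z \<in> S \<Longrightarrow> (f has_derivative (\<lambda>h. inner (f' z) h)) (at z within S)"
    and cvx: "convex_on S f" and S: "convex S" "a \<in> S" "b \<in> S"
  shows "f a + inner (f' a) (b - a) \<le> f b"
proof (rule ccontr)
  assume "\<not> ?thesis"
  then have c: "inner (f' a) (b - a) - (f b - f a) > 0" by simp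
  define \<phi> where "\<phi> = (\<lambda>\<theta>. f (a + \<theta> *\<^sub>R (b - a)) - \<theta> * (f b - f a))"
  \<comment> \<open>\<open>\<phi>\<close> would increase near 0, while convexity makes it at most \<open>f a = \<phi> 0\<close> on \<open>[0,1]\<close>.\<close>
  have "(\<phi> has_derivative (\<lambda>h. h * inner (f' (a + 0 *\<^sub>R (b - a))) (b - a) - h * (f b - f a))) (at 0 within {0..1})"
    unfolding \<phi>_def
    by (rule derivative_eq_intros has_derivative_along_segment[OF f' S order_refl zero_le_one] refl | simp)+
  moreover have "(\<lambda>h. h * inner (f' (a + 0 *\<^sub>R (b - a))) (b - a) - h * (f b - f a))
      = (*) (inner (f' a) (b - a) - (f b - f a))"
    by (auto simp: fun_eq_iff algebra_simps)
  ultimately have "(\<phi> has_real_derivative inner (f' a) (b - a) - (f b - f a)) (at 0 within {0..1})"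
    by (simp add: has_field_derivative_def)
  from has_real_derivative_pos_inc_right[OF this c] obtain e where e: "e > 0"
    "\<And>h. h > 0 \<Longrightarrow> h \<in> {0..1} \<Longrightarrow> h < e \<Longrightarrow> \<phi> 0 < \<phi> h" by auto
  define h where "h = min (e / 2) 1"
  have h: "0 < h" "h \<le> 1" "h < e" using e unfolding h_def by auto
  have "\<phi> 0 < \<phi> h" using e(2) h by auto
  moreover have "f (a + h *\<^sub>R (b - a)) \<le> (1 - h) * f a + h * f b"
  proof -
    have "a + h *\<^sub>R (b - a) = (1 - h) *\<^sub>R a + h *\<^sub>R b" by (simp add: algebra_simps)
    thus ?thesis using convex_onD[OF cvx, of h a b] S h by simp
  qed
  ultimately show False unfolding \<phi>_def by (simp add: algebra_simps)
qed

section \<open>Projections onto convex sets\<close>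

lemma power2_norm_add_scaleR:
  fixes u v :: "'a::real_inner"
  shows "(norm (u + c *\<^sub>R v))\<^sup>2 = (norm u)\<^sup>2 + 2 * c * inner u v + c\<^sup>2 * (norm v)\<^sup>2"
proof -
  have "(norm (u + c *\<^sub>R v))\<^sup>2 = inner u u + 2 * c * inner u v + c * c * inner v v"
    by (simp add: power2_norm_eq_inner inner_add_left inner_add_right inner_commute[of v u] distrib_left)
  then show ?thesis by (simp add: power2_norm_eq_inner[symmetric] power2_eq_square)
qed

lemma closest_point_three_point:
  assumes "convex S" "closed S" "z \<in> S"
  shows "2 * inner w (closest_point S (a - w) - z)
           \<le> (norm (a - z))\<^sup>2 - (norm (closest_point S (a - w) - z))\<^sup>2
             - (norm (closest_point S (a - w) - a))\<^sup>2"
proof -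
  define p where "p = closest_point S (a - w)"
  have "inner ((a - w) - p) (z - p) \<le> 0"
    unfolding p_def by (rule closest_point_dot[OF assms])
  moreover have "a - z = (p - z) + (-1) *\<^sub>R (p - a)" by simp
  then have "(norm (a - z))\<^sup>2 = (norm (p - z))\<^sup>2 + 2 * (-1) * inner (p - z) (p - a) + (-1)\<^sup>2 * (norm (p - a))\<^sup>2"
    by (simp only: power2_norm_add_scaleR)
  ultimately show ?thesis
    unfolding p_def[symmetric]
    by (simp add: inner_diff_left inner_diff_right inner_commute algebra_simps)
qed

lemma closest_point_ascent_inner:
  assumes "convex S" "closed S" "z \<in> S" and s: "0 < s"
  shows "inner (z - closest_point S (a + s *\<^sub>R c)) c
           \<le> ((norm (z - a))\<^sup>2 - (norm (z - closest_point S (a + s *\<^sub>R c)))\<^sup>2) / (2 * s)"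
proof -
  define p where "p = closest_point S (a + s *\<^sub>R c)"
  have "2 * inner ((- s) *\<^sub>R c) (p - z) \<le> (norm (a - z))\<^sup>2 - (norm (p - z))\<^sup>2 - (norm (p - a))\<^sup>2"
    using closest_point_three_point[OF assms(1-3), of "(- s) *\<^sub>R c" a] unfolding p_def by simp
  moreover have "inner ((- s) *\<^sub>R c) (p - z) = s * inner (z - p) c"
    by (simp add: inner_diff_left inner_diff_right inner_commute algebra_simps)
  ultimately have "2 * s * inner (z - p) c \<le> (norm (a - z))\<^sup>2 - (norm (p - z))\<^sup>2"
    using zero_le_power2[of "norm (p - a)"] by linarith
  then show ?thesis unfolding p_def[symmetric] using s by (simp add: field_simps norm_minus_commute)
qed

lemma prox_maximizer_eq_closest_point:
  fixes b c :: "'a::euclidean_space"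
  assumes Y: "convex Y" "closed Y" and y1: "y1 \<in> Y" and s: "s > 0"
    and max: "\<And>v. v \<in> Y \<Longrightarrow> inner v c - (norm (v - b))\<^sup>2 / (2 * s)
                                \<le> inner y1 c - (norm (y1 - b))\<^sup>2 / (2 * s)"
  shows "y1 = closest_point Y (b + s *\<^sub>R c)"
proof (rule closest_point_unique[OF Y y1], intro ballI)
  fix v assume v: "v \<in> Y"
  let ?a = "b + s *\<^sub>R c"
  \<comment> \<open>Up to a constant, \<open>- (norm (u - ?a))\<^sup>2 / (2 * s)\<close> is the prox objective.\<close>
  have dist_a: "(norm (u - ?a))\<^sup>2 = (norm (u - b))\<^sup>2 - 2 * s * inner u c + (2 * s * inner b c + s\<^sup>2 * (norm c)\<^sup>2)" for u
  proof -
    have "u - ?a = (u - b) + (-s) *\<^sub>R c" by (simp add: algebra_simps)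
    then have "(norm (u - ?a))\<^sup>2 = (norm (u - b))\<^sup>2 + 2 * (-s) * inner (u - b) c + (-s)\<^sup>2 * (norm c)\<^sup>2"
      by (simp only: power2_norm_add_scaleR)
    then show ?thesis by (simp add: inner_diff_left algebra_simps)
  qed
  have "2 * s * (inner v c - (norm (v - b))\<^sup>2 / (2 * s))
        \<le> 2 * s * (inner y1 c - (norm (y1 - b))\<^sup>2 / (2 * s))"
    using max[OF v] s by (intro mult_left_mono) auto
  then have "2 * s * inner v c - (norm (v - b))\<^sup>2 \<le> 2 * s * inner y1 c - (norm (y1 - b))\<^sup>2"
    using s by (simp add: right_diff_distrib)
  then have "(norm (y1 - ?a))\<^sup>2 \<le> (norm (v - ?a))\<^sup>2" unfolding dist_a by simp
  then have "norm (y1 - ?a) \<le> norm (v - ?a)" by (rule power2_le_imp_le) simp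
  then show "dist ?a y1 \<le> dist ?a v" by (simp add: dist_norm norm_minus_commute)
qed

lemma le_weighted_sum_if_square_le_product:
  fixes p a b r :: real
  assumes "0 \<le> a" "0 \<le> b" "0 < r" "p\<^sup>2 \<le> a * b"
  shows "p \<le> a / r + r * b / 4"
proof -
  have "(a / r + r * b / 4)\<^sup>2 - a * b = (a / r - r * b / 4)\<^sup>2"
    using assms by (simp add: power2_eq_square field_simps)
  then have "p\<^sup>2 \<le> (a / r + r * b / 4)\<^sup>2" using assms(4) by (metis diff_ge_0_iff_ge order_trans zero_le_power2)
  then have "\<bar>p\<bar> \<le> \<bar>a / r + r * b / 4\<bar>" by (simp only: abs_le_square_iff)
  moreover have "0 \<le> a / r + r * b / 4" using assms by simp
  ultimately show ?thesis using abs_ge_self[of p] by linarith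
qed

lemma inner_le_weighted_sum:
  fixes u v :: "'a::real_inner"
  assumes "0 < r"
  shows "inner u v \<le> (norm u)\<^sup>2 / r + r * (norm v)\<^sup>2 / 4"
proof (rule le_weighted_sum_if_square_le_product[OF _ _ assms])
  have "\<bar>inner u v\<bar> \<le> \<bar>norm u * norm v\<bar>" using Cauchy_Schwarz_ineq2 by simp
  then show "(inner u v)\<^sup>2 \<le> (norm u)\<^sup>2 * (norm v)\<^sup>2"
    by (simp only: abs_le_square_iff power_mult_distrib)
qed simp_all

lemma telescope_weighted_bound:
  fixes c a :: "nat \<Rightarrow> real"
  assumes "mono c" "\<And>k. 0 \<le> c k" "\<And>k. 0 \<le> a k" "\<And>k. a k \<le> A"
  shows "(\<Sum>k\<le>t. c k * (a k - a (Suc k))) \<le> c t * A"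
proof -
  have "(\<Sum>k\<le>t. c k * (a k - a (Suc k))) \<le> c t * A - c t * a (Suc t)"
  proof (induction t)
    case 0
    show ?case using mult_left_mono[OF assms(4) assms(2)] by (simp add: algebra_simps)
  next
    case (Suc t)
    have "(c (Suc t) - c t) * a (Suc t) \<le> (c (Suc t) - c t) * A"
      using \<open>mono c\<close> assms(4) by (simp add: mono_def mult_left_mono)
    with Suc show ?case by (simp add: algebra_simps)
  qed
  also have "\<dots> \<le> c t * A" using assms(2,3) by simp
  finally show ?thesis .
qed

lemma sum_inverse_sqrt_le:
  "(\<Sum>k\<le>t. 1 / sqrt (real (k + 1))) \<le> 2 * sqrt (real (t + 1))"
proof (induction t)
  case 0
  then show ?case by simp
next
  case (Suc t)
  define a where "a = sqrt (real t + 1)"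
  define b where "b = sqrt (real t + 2)"
  have ab: "a > 0" "b > 0" "a * a = real t + 1" "b * b = real t + 2"
    unfolding a_def b_def by simp_all
  \<comment> \<open>\<open>a * b \<le> t + 3/2\<close> by AM-GM, which is \<open>1 / b \<le> 2 * (b - a)\<close>.\<close>
  have "(a * b)\<^sup>2 \<le> (real t + 3 / 2)\<^sup>2"
  proof -
    have "(a * b)\<^sup>2 = (a * a) * (b * b)" by (simp add: power2_eq_square algebra_simps)
    then show ?thesis unfolding ab(3,4) by (simp add: power2_eq_square algebra_simps)
  qed
  then have "a * b \<le> real t + 3 / 2" by (rule power2_le_imp_le) simp
  then have "1 / b \<le> 2 * b - 2 * a" using ab by (simp add: field_simps)
  moreover have "sqrt (real (t + 1)) = a" "sqrt (real (Suc t + 1)) = b"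
    unfolding a_def b_def by (simp_all add: add.commute)
  ultimately show ?case using Suc by simp
qed

lemma sqrt_rate_simplify:
  fixes A B C L s :: real
  assumes "0 \<le> A" "0 < s"
  shows "((sqrt (real (t + 1)) + L) / 2 * A + B / (2 * s) + C * (2 * sqrt (real (t + 1)))) / real (t + 1)
    \<le> B / (2 * s * real (t + 1)) + L * A / (2 * real (t + 1)) + (A + 2 * C) / sqrt (real (t + 1))"
proof -
  define q where "q = sqrt (real (t + 1))"
  have q: "0 < q" "real (t + 1) = q * q" unfolding q_def by simp_all
  \<comment> \<open>The left-hand side equals the right-hand side with \<open>A / 2\<close> in place of \<open>A\<close>.\<close>
  have "((q + L) / 2 * A + B / (2 * s) + C * (2 * q)) / real (t + 1)
      = B / (2 * s * real (t + 1)) + L * A / (2 * real (t + 1)) + (A / 2 + 2 * C) / q"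
    unfolding q(2) using q(1) assms(2) by (simp add: field_simps)
  then show ?thesis unfolding q_def[symmetric] using q(1) assms(1) by (simp add: divide_right_mono)
qed

section \<open>The largest eigenvalue of a Gram matrix\<close>

lemma inner_gram_matrix:
  fixes F :: "real^'n^'m"
  shows "inner ((transpose F ** F) *v v) w = inner (F *v v) (F *v w)"
proof -
  have "(transpose F ** F) *v v = transpose F *v (F *v v)" by (simp add: matrix_vector_mul_assoc)
  also have "\<dots> = (F *v v) v* F" by simp
  finally show ?thesis by (simp add: dot_lmul_matrix)
qed

lemma finite_gram_eigenvalues:
  fixes F :: "real^'n^'m"
  shows "finite {\<mu>. \<exists>v. v \<noteq> 0 \<and> (transpose F ** F) *v v = \<mu> *\<^sub>R v}" (is "finite ?S")
proof -
  let ?A = "transpose F ** F"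
  define e where "e = (\<lambda>\<mu>. SOME v. v \<noteq> 0 \<and> ?A *v v = \<mu> *\<^sub>R v)"
  have e: "e \<mu> \<noteq> 0 \<and> ?A *v e \<mu> = \<mu> *\<^sub>R e \<mu>" if "\<mu> \<in> ?S" for \<mu>
  proof -
    have "\<exists>v. v \<noteq> 0 \<and> ?A *v v = \<mu> *\<^sub>R v" using that by simp
    then show ?thesis unfolding e_def by (rule someI_ex)
  qed
  have inj: "inj_on e ?S"
  proof (rule inj_onI)
    fix a b assume ab: "a \<in> ?S" "b \<in> ?S" "e a = e b"
    have "a *\<^sub>R e a = ?A *v e b" using e[OF ab(1)] ab(3) by simp
    also have "\<dots> = b *\<^sub>R e a" using e[OF ab(2)] ab(3) by simp
    finally show "a = b" using e[OF ab(1)] by simp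
  qed
  \<comment> \<open>The Gram matrix is symmetric, so eigenvectors for distinct eigenvalues are orthogonal.\<close>
  have "pairwise orthogonal (e ` ?S)"
    unfolding pairwise_def
  proof (intro ballI impI)
    fix p q assume "p \<in> e ` ?S" "q \<in> e ` ?S" "p \<noteq> q"
    then obtain a b where ab: "a \<in> ?S" "b \<in> ?S" "p = e a" "q = e b" by blast
    have "a * inner p q = inner (?A *v p) q" using e[OF ab(1)] ab(3) by simp
    also have "\<dots> = inner (?A *v q) p" unfolding inner_gram_matrix by (rule inner_commute)
    also have "\<dots> = b * inner p q" using e[OF ab(2)] ab(4) by (simp add: inner_commute)
    finally have "(a - b) * inner p q = 0" by (simp add: left_diff_distrib)
    moreover have "a \<noteq> b" using ab \<open>p \<noteq> q\<close> by blast
    ultimately show "orthogonal p q" unfolding orthogonal_def by simp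
  qed
  moreover have "0 \<notin> e ` ?S" using e by (metis (no_types, lifting) image_iff)
  ultimately have "finite (e ` ?S)"
    using finiteI_independent pairwise_orthogonal_independent by blast
  then show ?thesis using inj finite_imageD by blast
qed

lemma nonpos_if_quadratic_nonpos:
  fixes \<alpha> \<beta> :: real
  assumes "\<And>\<theta>. \<theta> > 0 \<Longrightarrow> 2 * \<theta> * \<alpha> + \<theta>\<^sup>2 * \<beta> \<le> 0"
  shows "\<alpha> \<le> 0"
proof (rule ccontr)
  assume "\<not> \<alpha> \<le> 0"
  then have \<alpha>: "\<alpha> > 0" by simp
  define \<theta> where "\<theta> = \<alpha> / (\<bar>\<beta>\<bar> + 1)"
  have \<theta>: "\<theta> > 0" "\<theta> * \<bar>\<beta>\<bar> \<le> \<alpha>"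
    using \<alpha> unfolding \<theta>_def by (simp_all add: divide_le_eq mult.commute)
  have "\<theta> * (2 * \<alpha> + \<theta> * \<beta>) \<le> 0"
    using assms[OF \<theta>(1)] by (simp add: power2_eq_square algebra_simps)
  then have "2 * \<alpha> + \<theta> * \<beta> \<le> 0" using \<theta>(1) by (simp add: mult_le_0_iff)
  moreover have "\<theta> * (- \<bar>\<beta>\<bar>) \<le> \<theta> * \<beta>" using \<theta>(1) by (intro mult_left_mono) auto
  ultimately show False using \<alpha> \<theta>(2) by simp
qed

text \<open>Perturbing a maximiser \<open>v0\<close> of the Rayleigh quotient of \<open>transpose F ** F\<close> along its
  residual \<open>w\<close> changes the quotient at first order by \<open>2 * \<theta> * (norm w)\<^sup>2\<close>, so \<open>w = 0\<close>.\<close>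
lemma gram_maximizer_eigenvector:
  fixes F :: "real^'n^'m"
  assumes max: "\<And>v. (norm (F *v v))\<^sup>2 \<le> \<mu> * (norm v)\<^sup>2"
    and v0: "norm v0 = 1" "\<mu> = (norm (F *v v0))\<^sup>2"
  shows "(transpose F ** F) *v v0 = \<mu> *\<^sub>R v0"
proof -
  let ?q = "\<lambda>v. (norm (F *v v))\<^sup>2"
  define w where "w = (transpose F ** F) *v v0 - \<mu> *\<^sub>R v0"
  have "2 * \<theta> * (norm w)\<^sup>2 + \<theta>\<^sup>2 * (?q w - \<mu> * (norm w)\<^sup>2) \<le> 0" if "\<theta> > 0" for \<theta>
  proof -
    have "F *v (v0 + \<theta> *\<^sub>R w) = F *v v0 + \<theta> *\<^sub>R (F *v w)"
      by (simp add: matrix_vector_right_distrib matrix_vector_mult_scaleR)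
    then have 1: "?q (v0 + \<theta> *\<^sub>R w) = \<mu> + 2 * \<theta> * inner (F *v v0) (F *v w) + \<theta>\<^sup>2 * ?q w"
      unfolding v0(2) by (simp only: power2_norm_add_scaleR)
    have 2: "(norm (v0 + \<theta> *\<^sub>R w))\<^sup>2 = 1 + 2 * \<theta> * inner v0 w + \<theta>\<^sup>2 * (norm w)\<^sup>2"
      using v0(1) by (simp add: power2_norm_add_scaleR)
    have 3: "inner (F *v v0) (F *v w) - \<mu> * inner v0 w = (norm w)\<^sup>2"
      unfolding inner_gram_matrix[symmetric] w_def power2_norm_eq_inner
      by (simp add: inner_diff_left inner_diff_right inner_commute[of v0 "(transpose F ** F) *v v0"])
    have "\<mu> + 2 * \<theta> * inner (F *v v0) (F *v w) + \<theta>\<^sup>2 * ?q w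
          \<le> \<mu> * (1 + 2 * \<theta> * inner v0 w + \<theta>\<^sup>2 * (norm w)\<^sup>2)"
      using max[of "v0 + \<theta> *\<^sub>R w"] 1 2 by simp
    then have "2 * \<theta> * (inner (F *v v0) (F *v w) - \<mu> * inner v0 w) + \<theta>\<^sup>2 * (?q w - \<mu> * (norm w)\<^sup>2) \<le> 0"
      by (simp add: algebra_simps)
    then show ?thesis unfolding 3 .
  qed
  then have "(norm w)\<^sup>2 \<le> 0" by (rule nonpos_if_quadratic_nonpos)
  then show ?thesis unfolding w_def by simp
qed

lemma norm_matrix_vector_le_lambda_max:
  fixes F :: "real^'n^'m"
  shows "(norm (F *v v))\<^sup>2 \<le> lambda_max (transpose F ** F) * (norm v)\<^sup>2"
proof -
  let ?q = "\<lambda>v. (norm (F *v v))\<^sup>2"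
  have "sphere (0::real^'n) 1 \<noteq> {}" by simp
  moreover have "continuous_on (sphere 0 1) ?q" by (intro continuous_intros)
  ultimately obtain v0 where v0: "v0 \<in> sphere 0 1" "\<forall>v\<in>sphere 0 1. ?q v \<le> ?q v0"
    using continuous_attains_sup[of "sphere 0 1" ?q] by auto
  have nv0: "norm v0 = 1" using v0 by simp
  have max: "?q v \<le> ?q v0 * (norm v)\<^sup>2" for v
  proof (cases "v = 0")
    case False
    then have "?q (v /\<^sub>R norm v) \<le> ?q v0" using v0 by simp
    moreover have "?q (v /\<^sub>R norm v) = ?q v / (norm v)\<^sup>2"
      by (simp add: matrix_vector_mult_scaleR power_mult_distrib field_simps)
    ultimately show ?thesis using False by (simp add: divide_le_eq mult.commute)
  qed simp
  have "(transpose F ** F) *v v0 = ?q v0 *\<^sub>R v0"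
    by (rule gram_maximizer_eigenvector[OF max nv0 refl])
  moreover have "v0 \<noteq> 0" using nv0 by auto
  ultimately have "?q v0 \<in> {\<mu>. \<exists>v. v \<noteq> 0 \<and> (transpose F ** F) *v v = \<mu> *\<^sub>R v}" by blast
  then have "?q v0 \<le> lambda_max (transpose F ** F)"
    unfolding lambda_max_def using finite_gram_eigenvalues[of F] by simp
  then show ?thesis using max[of v] by (meson mult_right_mono order_trans zero_le_power2)
qed

lemma lambda_max_gram_nonneg:
  fixes F :: "real^'n^'m"
  shows "0 \<le> lambda_max (transpose F ** F)"
proof -
  have "0 \<le> (norm (F *v axis undefined 1))\<^sup>2" by simp
  also have "\<dots> \<le> lambda_max (transpose F ** F) * (norm (axis undefined (1::real) :: real^'n))\<^sup>2"
    by (rule norm_matrix_vector_le_lambda_max)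
  finally show ?thesis by simp
qed

lemma inner_matrix_vector_le_weighted_sum:
  fixes F :: "real^'n^'m"
  assumes r: "0 < r" and u: "norm u \<le> d"
  shows "inner u (F *v v) \<le> lambda_max (transpose F ** F) * d\<^sup>2 / r + r * (norm v)\<^sup>2 / 4"
proof (rule le_weighted_sum_if_square_le_product[OF _ _ r])
  have "\<bar>inner u (F *v v)\<bar> \<le> d * norm (F *v v)"
    using Cauchy_Schwarz_ineq2[of u "F *v v"] mult_right_mono[OF u norm_ge_zero[of "F *v v"]] by linarith
  then have "\<bar>inner u (F *v v)\<bar>\<^sup>2 \<le> (d * norm (F *v v))\<^sup>2"
    by (rule power_mono) simp
  then have "(inner u (F *v v))\<^sup>2 \<le> d\<^sup>2 * (norm (F *v v))\<^sup>2"
    by (simp add: power_mult_distrib)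
  also have "\<dots> \<le> d\<^sup>2 * (lambda_max (transpose F ** F) * (norm v)\<^sup>2)"
    by (intro mult_left_mono norm_matrix_vector_le_lambda_max) simp
  finally show "(inner u (F *v v))\<^sup>2 \<le> lambda_max (transpose F ** F) * d\<^sup>2 * (norm v)\<^sup>2"
    by (simp add: algebra_simps)
qed (simp_all add: lambda_max_gram_nonneg)

section \<open>Expectations involving a fresh independent sample\<close>

lemma borel_measurable_continuous_on_comp:
  fixes f :: "'a::topological_space \<Rightarrow> 'b::real_normed_vector"
  assumes f: "continuous_on S f" "closed S"
    and \<phi>: "\<phi> \<in> borel_measurable N" "\<And>z. z \<in> space N \<Longrightarrow> \<phi> z \<in> S"
  shows "(\<lambda>z. f (\<phi> z)) \<in> borel_measurable N"
proof -
  have "(\<lambda>v. if v \<in> S then f v else 0) \<in> borel_measurable borel"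
    using f by (intro borel_measurable_continuous_on_if) (auto intro: continuous_on_const)
  from measurable_compose[OF \<phi>(1) this] show ?thesis
    by (rule measurable_cong[THEN iffD1, rotated]) (simp add: \<phi>(2))
qed

lemma (in prob_space) integral_fresh_sample:
  fixes H :: "'p \<times> 'e \<Rightarrow> real"
  assumes Z: "Z \<in> measurable M N" and W: "W \<in> measurable M D"
    and joint: "distr M (N \<Otimes>\<^sub>M D) (\<lambda>\<omega>. (Z \<omega>, W \<omega>)) = distr M N Z \<Otimes>\<^sub>M D"
    and H: "H \<in> borel_measurable (N \<Otimes>\<^sub>M D)" and H_int: "integrable (distr M N Z \<Otimes>\<^sub>M D) H"
    and D: "prob_space D"
  shows "integrable M (\<lambda>\<omega>. H (Z \<omega>, W \<omega>))"
    "(\<integral>\<omega>. H (Z \<omega>, W \<omega>) \<partial>M) = (\<integral>z. (\<integral>e. H (z, e) \<partial>D) \<partial>distr M N Z)"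
proof -
  interpret Q: prob_space "distr M N Z" by (rule prob_space_distr[OF Z])
  interpret D: prob_space D by (rule D)
  interpret QD: pair_prob_space "distr M N Z" D ..
  have ZW: "(\<lambda>\<omega>. (Z \<omega>, W \<omega>)) \<in> measurable M (N \<Otimes>\<^sub>M D)" using Z W by (rule measurable_Pair)
  show "integrable M (\<lambda>\<omega>. H (Z \<omega>, W \<omega>))"
    using H_int integrable_distr_eq[OF ZW H] joint by simp
  have "(\<integral>\<omega>. H (Z \<omega>, W \<omega>) \<partial>M) = integral\<^sup>L (distr M N Z \<Otimes>\<^sub>M D) H"
    using integral_distr[OF ZW H] joint by simp
  also have "\<dots> = (\<integral>z. (\<integral>e. H (z, e) \<partial>D) \<partial>distr M N Z)"
    by (rule QD.integral_fst'[OF H_int, symmetric])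
  finally show "(\<integral>\<omega>. H (Z \<omega>, W \<omega>) \<partial>M) = (\<integral>z. (\<integral>e. H (z, e) \<partial>D) \<partial>distr M N Z)" .
qed

lemma (in prob_space) distr_past_fresh_sample:
  assumes indep: "indep_vars (\<lambda>_. D) \<xi> UNIV" and fresh: "distr M D (\<xi> (Suc k)) = D"
  shows "distr M (PiM {..k} (\<lambda>_. D) \<Otimes>\<^sub>M D) (\<lambda>\<omega>. (restrict (\<lambda>i. \<xi> i \<omega>) {..k}, \<xi> (Suc k) \<omega>))
    = distr M (PiM {..k} (\<lambda>_. D)) (\<lambda>\<omega>. restrict (\<lambda>i. \<xi> i \<omega>) {..k}) \<Otimes>\<^sub>M D"
proof -
  let ?P = "PiM {..k} (\<lambda>_. D)" and ?P1 = "PiM {Suc k} (\<lambda>_. D)"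
  let ?Z = "\<lambda>\<omega>. restrict (\<lambda>i. \<xi> i \<omega>) {..k}" and ?W = "\<lambda>\<omega>. restrict (\<lambda>i. \<xi> i \<omega>) {Suc k}"
  let ?ev = "\<lambda>w. w (Suc k)"
  have "indep_var ?P ?Z ?P1 ?W" by (rule indep_var_restrict[OF indep]) auto
  then have Z: "?Z \<in> measurable M ?P" and W: "?W \<in> measurable M ?P1"
    and joint: "distr M ?P ?Z \<Otimes>\<^sub>M distr M ?P1 ?W = distr M (?P \<Otimes>\<^sub>M ?P1) (\<lambda>\<omega>. (?Z \<omega>, ?W \<omega>))"
    unfolding indep_var_distribution_eq by auto
  have "random_variable D (\<xi> (Suc k))" using indep unfolding indep_vars_def by simp
  then have D: "prob_space D" using prob_space_distr fresh by metis
  have ev: "?ev \<in> measurable ?P1 D" by (rule measurable_component_singleton) auto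
  have W_D: "distr (distr M ?P1 ?W) D ?ev = D"
    using distr_distr[OF ev W] fresh by (simp add: comp_def)
  have "distr M (?P \<Otimes>\<^sub>M D) (\<lambda>\<omega>. (?Z \<omega>, \<xi> (Suc k) \<omega>))
      = distr (distr M (?P \<Otimes>\<^sub>M ?P1) (\<lambda>\<omega>. (?Z \<omega>, ?W \<omega>))) (?P \<Otimes>\<^sub>M D) (\<lambda>(z, w). (z, ?ev w))"
    using Z W ev by (subst distr_distr) (auto simp: comp_def)
  also have "\<dots> = distr (distr M ?P ?Z) ?P (\<lambda>z. z) \<Otimes>\<^sub>M distr (distr M ?P1 ?W) D ?ev"
    unfolding joint[symmetric] using ev W_D
    by (intro pair_measure_distr[symmetric]) (auto intro: prob_space_imp_sigma_finite[OF D])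
  finally show ?thesis unfolding W_D by (simp add: distr_id2)
qed

lemma integrable_pair_measure_nonneg:
  fixes H :: "'a \<times> 'b \<Rightarrow> real"
  assumes "prob_space Q" "prob_space D"
    and H: "H \<in> borel_measurable (Q \<Otimes>\<^sub>M D)" "\<And>p. 0 \<le> H p"
    and bound: "\<And>z. z \<in> space Q \<Longrightarrow> integrable D (\<lambda>e. H (z, e)) \<and> (\<integral>e. H (z, e) \<partial>D) \<le> c"
  shows "integrable (Q \<Otimes>\<^sub>M D) H"
proof (rule integrableI_nonneg[OF H(1)])
  interpret Q: prob_space Q by fact
  interpret D: prob_space D by fact
  interpret QD: pair_prob_space Q D ..
  show "AE p in Q \<Otimes>\<^sub>M D. 0 \<le> H p" using H(2) by simp
  have "(\<integral>\<^sup>+ p. ennreal (H p) \<partial>(Q \<Otimes>\<^sub>M D)) = (\<integral>\<^sup>+ z. \<integral>\<^sup>+ e. ennreal (H (z, e)) \<partial>D \<partial>Q)"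
    using H(1) by (subst D.nn_integral_fst[symmetric]) auto
  also have "\<dots> \<le> (\<integral>\<^sup>+ z. ennreal c \<partial>Q)"
  proof (rule nn_integral_mono)
    fix z assume z: "z \<in> space Q"
    have "(\<integral>\<^sup>+ e. ennreal (H (z, e)) \<partial>D) = ennreal (\<integral>e. H (z, e) \<partial>D)"
      using bound[OF z] H(2) by (intro nn_integral_eq_integral) auto
    also have "\<dots> \<le> ennreal c" using bound[OF z] by (intro ennreal_leI) auto
    finally show "(\<integral>\<^sup>+ e. ennreal (H (z, e)) \<partial>D) \<le> ennreal c" .
  qed
  also have "\<dots> < \<infinity>" by (simp add: Q.emeasure_space_1)
  finally show "(\<integral>\<^sup>+ p. ennreal (H p) \<partial>(Q \<Otimes>\<^sub>M D)) < \<infinity>" .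
qed

lemma (in prob_space) expectation_fresh_sample_le:
  fixes H :: "'p \<times> 'e \<Rightarrow> real"
  assumes Z: "Z \<in> measurable M N" and W: "W \<in> measurable M D" and D: "prob_space D"
    and joint: "distr M (N \<Otimes>\<^sub>M D) (\<lambda>\<omega>. (Z \<omega>, W \<omega>)) = distr M N Z \<Otimes>\<^sub>M D"
    and H: "H \<in> borel_measurable (N \<Otimes>\<^sub>M D)" "\<And>p. 0 \<le> H p"
    and bound: "\<And>z. z \<in> space N \<Longrightarrow> integrable D (\<lambda>e. H (z, e)) \<and> (\<integral>e. H (z, e) \<partial>D) \<le> c"
  shows "integrable (distr M N Z \<Otimes>\<^sub>M D) H" "integrable M (\<lambda>\<omega>. H (Z \<omega>, W \<omega>))"
    and "(\<integral>\<omega>. H (Z \<omega>, W \<omega>) \<partial>M) \<le> c"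
proof -
  interpret Q: prob_space "distr M N Z" by (rule prob_space_distr[OF Z])
  interpret D: prob_space D by (rule D)
  interpret QD: pair_prob_space "distr M N Z" D ..
  have "H \<in> borel_measurable (distr M N Z \<Otimes>\<^sub>M D)"
    using H(1) by (simp cong: measurable_cong_sets)
  then show H_int: "integrable (distr M N Z \<Otimes>\<^sub>M D) H"
    using H(2) bound by (intro integrable_pair_measure_nonneg[OF Q.prob_space_axioms D]) auto
  note fubini = integral_fresh_sample[OF Z W joint H(1) H_int D]
  show "integrable M (\<lambda>\<omega>. H (Z \<omega>, W \<omega>))" by (rule fubini(1))
  have "(\<integral>z. (\<integral>e. H (z, e) \<partial>D) \<partial>distr M N Z) \<le> (\<integral>z. c \<partial>distr M N Z)"
    using bound QD.integrable_fst'[OF H_int] by (intro integral_mono) auto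
  then show "(\<integral>\<omega>. H (Z \<omega>, W \<omega>) \<partial>M) \<le> c"
    unfolding fubini(2) using Q.prob_space by simp
qed

lemma (in prob_space) expectation_fresh_sample_eq_0:
  fixes H :: "'p \<times> 'e \<Rightarrow> real"
  assumes Z: "Z \<in> measurable M N" and W: "W \<in> measurable M D" and D: "prob_space D"
    and joint: "distr M (N \<Otimes>\<^sub>M D) (\<lambda>\<omega>. (Z \<omega>, W \<omega>)) = distr M N Z \<Otimes>\<^sub>M D"
    and H: "H \<in> borel_measurable (N \<Otimes>\<^sub>M D)" "integrable (distr M N Z \<Otimes>\<^sub>M D) H"
    and mean: "\<And>z. z \<in> space N \<Longrightarrow> (\<integral>e. H (z, e) \<partial>D) = 0"
  shows "integrable M (\<lambda>\<omega>. H (Z \<omega>, W \<omega>))" and "(\<integral>\<omega>. H (Z \<omega>, W \<omega>) \<partial>M) = 0"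
proof -
  note fubini = integral_fresh_sample[OF Z W joint H D]
  show "integrable M (\<lambda>\<omega>. H (Z \<omega>, W \<omega>))" by (rule fubini(1))
  have "(\<integral>z. (\<integral>e. H (z, e) \<partial>D) \<partial>distr M N Z) = (\<integral>z. 0 \<partial>distr M N Z)"
    using mean by (intro Bochner_Integration.integral_cong) auto
  then show "(\<integral>\<omega>. H (Z \<omega>, W \<omega>) \<partial>M) = 0" unfolding fubini(2) by simp
qed

lemma borel_measurable_gradient_error:
  fixes G :: "'v::euclidean_space \<Rightarrow> 'e \<Rightarrow> 'v" and gl :: "'v \<Rightarrow> 'v"
  assumes \<phi>: "\<phi> \<in> borel_measurable N" "\<And>z. z \<in> space N \<Longrightarrow> \<phi> z \<in> S"
    and "closed S" "continuous_on S gl"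
    and G: "(\<lambda>(z, e). G z e) \<in> borel_measurable (borel \<Otimes>\<^sub>M D)"
  shows "(\<lambda>p. G (\<phi> (fst p)) (snd p) - gl (\<phi> (fst p))) \<in> borel_measurable (N \<Otimes>\<^sub>M D)"
proof -
  have \<phi>_fst: "(\<lambda>p. \<phi> (fst p)) \<in> borel_measurable (N \<Otimes>\<^sub>M D)" using \<phi>(1) by measurable
  have "(\<lambda>p. (\<phi> (fst p), snd p)) \<in> measurable (N \<Otimes>\<^sub>M D) (borel \<Otimes>\<^sub>M D)" using \<phi>(1) by measurable
  from measurable_compose[OF this G] have "(\<lambda>p. G (\<phi> (fst p)) (snd p)) \<in> borel_measurable (N \<Otimes>\<^sub>M D)"
    by simp
  moreover have "(\<lambda>p. gl (\<phi> (fst p))) \<in> borel_measurable (N \<Otimes>\<^sub>M D)"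
    using assms(4,3) \<phi>_fst by (rule borel_measurable_continuous_on_comp) (auto simp: space_pair_measure \<phi>(2))
  ultimately show ?thesis by measurable
qed

lemma abs_inner_le_one_plus_square:
  fixes d v :: "'a::real_inner"
  assumes "norm v \<le> K"
  shows "\<bar>inner d v\<bar> \<le> K * (1 + (norm d)\<^sup>2)"
proof -
  have "norm d \<le> 1 + (norm d)\<^sup>2"
    using zero_le_power2[of "norm d - 1 / 2"] by (simp add: power2_eq_square algebra_simps)
  then have "norm d * norm v \<le> (1 + (norm d)\<^sup>2) * K"
    using assms by (intro mult_mono) auto
  then show ?thesis using Cauchy_Schwarz_ineq2[of d v] by (simp add: mult.commute)
qed

lemma (in prob_space) gradient_noise_moments:
  fixes G :: "'v::euclidean_space \<Rightarrow> 'e \<Rightarrow> 'v" and gl :: "'v \<Rightarrow> 'v" and \<phi> :: "'p \<Rightarrow> 'v"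
  assumes Z: "Z \<in> measurable M N" and W: "W \<in> measurable M D" and D: "prob_space D"
    and joint: "distr M (N \<Otimes>\<^sub>M D) (\<lambda>\<omega>. (Z \<omega>, W \<omega>)) = distr M N Z \<Otimes>\<^sub>M D"
    and \<phi>: "\<phi> \<in> borel_measurable N" "\<And>z. z \<in> space N \<Longrightarrow> \<phi> z \<in> S"
    and S: "bounded S" "closed S" and gl: "continuous_on S gl"
    and G: "(\<lambda>(z, e). G z e) \<in> borel_measurable (borel \<Otimes>\<^sub>M D)"
    and unbiased: "\<And>z. z \<in> S \<Longrightarrow> integrable D (G z) \<and> (\<integral>e. G z e \<partial>D) = gl z"
    and variance: "\<And>z. z \<in> S \<Longrightarrow> integrable D (\<lambda>e. (norm (G z e - gl z))\<^sup>2)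
                                  \<and> (\<integral>e. (norm (G z e - gl z))\<^sup>2 \<partial>D) \<le> c"
  shows "integrable M (\<lambda>\<omega>. (norm (G (\<phi> (Z \<omega>)) (W \<omega>) - gl (\<phi> (Z \<omega>))))\<^sup>2)"
    and "(\<integral>\<omega>. (norm (G (\<phi> (Z \<omega>)) (W \<omega>) - gl (\<phi> (Z \<omega>))))\<^sup>2 \<partial>M) \<le> c"
    and "integrable M (\<lambda>\<omega>. inner (G (\<phi> (Z \<omega>)) (W \<omega>) - gl (\<phi> (Z \<omega>))) (\<phi> (Z \<omega>) - u))"
    and "(\<integral>\<omega>. inner (G (\<phi> (Z \<omega>)) (W \<omega>) - gl (\<phi> (Z \<omega>))) (\<phi> (Z \<omega>) - u) \<partial>M) = 0"
proof -
  interpret Q: prob_space "distr M N Z" by (rule prob_space_distr[OF Z])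
  interpret D: prob_space D by (rule D)
  interpret QD: pair_prob_space "distr M N Z" D ..
  define \<delta> where "\<delta> = (\<lambda>p. G (\<phi> (fst p)) (snd p) - gl (\<phi> (fst p)))"
  define H2 where "H2 = (\<lambda>p. (norm (\<delta> p))\<^sup>2)"
  define H1 where "H1 = (\<lambda>p. inner (\<delta> p) (\<phi> (fst p) - u))"
  have \<phi>_fst: "(\<lambda>p. \<phi> (fst p)) \<in> borel_measurable (N \<Otimes>\<^sub>M D)" using \<phi>(1) by measurable
  have \<delta>_meas: "\<delta> \<in> borel_measurable (N \<Otimes>\<^sub>M D)"
    unfolding \<delta>_def by (rule borel_measurable_gradient_error[OF \<phi> S(2) gl G])
  have H2_meas: "H2 \<in> borel_measurable (N \<Otimes>\<^sub>M D)" unfolding H2_def using \<delta>_meas by measurable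
  have H2_nonneg: "0 \<le> H2 p" for p unfolding H2_def by simp
  have H2_bound: "integrable D (\<lambda>e. H2 (z, e)) \<and> (\<integral>e. H2 (z, e) \<partial>D) \<le> c" if "z \<in> space N" for z
    using variance[OF \<phi>(2)[OF that]] unfolding H2_def \<delta>_def by simp
  note H2 = expectation_fresh_sample_le[OF Z W D joint H2_meas H2_nonneg H2_bound]
  from H2(2,3) show "integrable M (\<lambda>\<omega>. (norm (G (\<phi> (Z \<omega>)) (W \<omega>) - gl (\<phi> (Z \<omega>))))\<^sup>2)"
    and "(\<integral>\<omega>. (norm (G (\<phi> (Z \<omega>)) (W \<omega>) - gl (\<phi> (Z \<omega>))))\<^sup>2 \<partial>M) \<le> c"
    unfolding H2_def \<delta>_def by simp_all
  have H1_meas: "H1 \<in> borel_measurable (N \<Otimes>\<^sub>M D)" unfolding H1_def using \<delta>_meas \<phi>_fst by measurable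
  obtain B where B: "\<And>v. v \<in> S \<Longrightarrow> norm v \<le> B" using S(1) unfolding bounded_iff by auto
  have "integrable (distr M N Z \<Otimes>\<^sub>M D) H1"
  proof (rule Bochner_Integration.integrable_bound)
    show "integrable (distr M N Z \<Otimes>\<^sub>M D) (\<lambda>p. (B + norm u) * (1 + H2 p))"
      using H2(1) by auto
    show "H1 \<in> borel_measurable (distr M N Z \<Otimes>\<^sub>M D)" using H1_meas by (simp cong: measurable_cong_sets)
    show "AE p in distr M N Z \<Otimes>\<^sub>M D. norm (H1 p) \<le> norm ((B + norm u) * (1 + H2 p))"
    proof (rule AE_I2)
      fix p assume "p \<in> space (distr M N Z \<Otimes>\<^sub>M D)"
      then have "norm (\<phi> (fst p) - u) \<le> B + norm u"
        using B \<phi>(2) norm_triangle_ineq4[of "\<phi> (fst p)" u] by (fastforce simp: space_pair_measure)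
      moreover from this have "0 \<le> B + norm u" by (rule order_trans[OF norm_ge_zero])
      ultimately show "norm (H1 p) \<le> norm ((B + norm u) * (1 + H2 p))"
        unfolding H1_def H2_def real_norm_def by (simp add: abs_inner_le_one_plus_square abs_mult)
    qed
  qed
  moreover have "(\<integral>e. H1 (z, e) \<partial>D) = 0" if "z \<in> space N" for z
  proof -
    have "integrable D (\<lambda>e. G (\<phi> z) e - gl (\<phi> z))" using unbiased[OF \<phi>(2)[OF that]] by auto
    then have "(\<integral>e. H1 (z, e) \<partial>D) = inner (\<integral>e. G (\<phi> z) e - gl (\<phi> z) \<partial>D) (\<phi> z - u)"
      unfolding H1_def \<delta>_def by (simp add: integral_inner_left)
    also have "(\<integral>e. G (\<phi> z) e - gl (\<phi> z) \<partial>D) = 0"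
      using unbiased[OF \<phi>(2)[OF that]] by (simp add: D.prob_space)
    finally show ?thesis by simp
  qed
  ultimately show "integrable M (\<lambda>\<omega>. inner (G (\<phi> (Z \<omega>)) (W \<omega>) - gl (\<phi> (Z \<omega>))) (\<phi> (Z \<omega>) - u))"
    and "(\<integral>\<omega>. inner (G (\<phi> (Z \<omega>)) (W \<omega>) - gl (\<phi> (Z \<omega>))) (\<phi> (Z \<omega>) - u) \<partial>M) = 0"
    using expectation_fresh_sample_eq_0[OF Z W D joint H1_meas] unfolding H1_def \<delta>_def by simp_all
qed

text \<open>The state after \<open>k\<close> steps of a recursion driven by the samples \<open>z 1, \<dots>, z k\<close>
  (step \<open>k\<close> consumes \<open>z (Suc k)\<close>; \<open>z 0\<close> is never read).\<close>
primrec iterate_samples :: "(nat \<Rightarrow> 's \<Rightarrow> 'e \<Rightarrow> 's) \<Rightarrow> 's \<Rightarrow> nat \<Rightarrow> (nat \<Rightarrow> 'e) \<Rightarrow> 's" where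
  "iterate_samples f s0 0 z = s0"
| "iterate_samples f s0 (Suc k) z = f k (iterate_samples f s0 k z) (z (Suc k))"

lemma iterate_samples_cong:
  "(\<And>i. i \<le> k \<Longrightarrow> z i = z' i) \<Longrightarrow> iterate_samples f s0 k z = iterate_samples f s0 k z'"
  by (induction k) auto

lemma measurable_iterate_samples:
  assumes f: "\<And>k. (\<lambda>(p, e). f k p e) \<in> measurable (S \<Otimes>\<^sub>M D) S" and s0: "s0 \<in> space S"
  shows "iterate_samples f s0 k \<in> measurable (PiM {..k} (\<lambda>_. D)) S"
proof (induction k)
  case 0
  show ?case using s0 by simp
next
  case (Suc k)
  have "(\<lambda>z. (iterate_samples f s0 k (restrict z {..k}), z (Suc k))) \<in> measurable (PiM {..Suc k} (\<lambda>_. D)) (S \<Otimes>\<^sub>M D)"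
  proof (rule measurable_Pair)
    show "(\<lambda>z. iterate_samples f s0 k (restrict z {..k})) \<in> measurable (PiM {..Suc k} (\<lambda>_. D)) S"
      by (rule measurable_compose[OF measurable_restrict_subset Suc]) auto
  qed (rule measurable_component_singleton, simp)
  from measurable_compose[OF this f]
  have "(\<lambda>z. f k (iterate_samples f s0 k (restrict z {..k})) (z (Suc k))) \<in> measurable (PiM {..Suc k} (\<lambda>_. D)) S"
    by simp
  moreover have "iterate_samples f s0 (Suc k) z = f k (iterate_samples f s0 k (restrict z {..k})) (z (Suc k))" for z
    by (simp add: iterate_samples_cong[of k z "restrict z {..k}"])
  ultimately show ?case by simp
qed

section \<open>Pathwise analysis of the primal-dual iteration\<close>

locale smooth_saddle_problem =
  fixes X :: "(real^'n) set" and Y :: "(real^'m) set" and F :: "real^'n^'m"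
    and l :: "real^'n \<Rightarrow> real" and gl :: "real^'n \<Rightarrow> real^'n" and L :: real
    and xs :: "real^'n" and ys :: "real^'m"
  assumes convex_X: "convex X" and compact_X: "compact X"
    and convex_Y: "convex Y" and compact_Y: "compact Y"
    and l_convex: "convex_on X l"
    and l_gradient: "\<And>z. z \<in> X \<Longrightarrow> (l has_derivative (\<lambda>h. inner (gl z) h)) (at z within X)"
    and gl_lipschitz: "\<And>z w. z \<in> X \<Longrightarrow> w \<in> X \<Longrightarrow> norm (gl z - gl w) \<le> L * norm (z - w)"
    and L_nonneg: "0 \<le> L"
    and saddle: "is_saddle_point Y X (Psaddle l F) ys xs"
begin

lemma closed_X: "closed X" and closed_Y: "closed Y" and xs_in_X: "xs \<in> X" and ys_in_Y: "ys \<in> Y"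
  using compact_X compact_Y saddle by (auto simp: compact_imp_closed is_saddle_point_def)

definition saddle_gap :: "real^'n \<Rightarrow> real^'m \<Rightarrow> real" where
  "saddle_gap x y = Psaddle l F ys x - Psaddle l F y xs"

lemma l_continuous: "continuous_on X l"
  using l_gradient has_derivative_continuous continuous_on_eq_continuous_within by blast

lemma saddle_gap_nonneg: "x \<in> X \<Longrightarrow> y \<in> Y \<Longrightarrow> 0 \<le> saddle_gap x y"
  using saddle unfolding is_saddle_point_def saddle_gap_def by (meson diff_ge_0_iff_ge order_trans)

lemma saddle_gap_convex_combination:
  assumes I: "finite I" and a: "\<And>k. k \<in> I \<Longrightarrow> 0 \<le> a k" "sum a I = 1"
    and x: "\<And>k. k \<in> I \<Longrightarrow> x k \<in> X"
  shows "saddle_gap (\<Sum>k\<in>I. a k *\<^sub>R x k) (\<Sum>k\<in>I. a k *\<^sub>R y k) \<le> (\<Sum>k\<in>I. a k * saddle_gap (x k) (y k))"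
proof -
  have "l (\<Sum>k\<in>I. a k *\<^sub>R x k) \<le> (\<Sum>k\<in>I. a k * l (x k))"
    using a x by (intro convex_on_sum[OF I _ l_convex a(2)]) auto
  moreover have "inner ys (F *v (\<Sum>k\<in>I. a k *\<^sub>R x k)) = (\<Sum>k\<in>I. a k * inner ys (F *v x k))"
    by (simp add: linear_sum[OF matrix_vector_mul_linear] o_def matrix_vector_mult_scaleR inner_sum_right)
  moreover have "inner (\<Sum>k\<in>I. a k *\<^sub>R y k) (F *v xs) = (\<Sum>k\<in>I. a k * inner (y k) (F *v xs))"
    by (simp add: inner_sum_left)
  moreover have "(\<Sum>k\<in>I. a k * saddle_gap (x k) (y k))
      = (\<Sum>k\<in>I. a k * l (x k)) + (\<Sum>k\<in>I. a k * inner ys (F *v x k))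
        - (\<Sum>k\<in>I. a k) * l xs - (\<Sum>k\<in>I. a k * inner (y k) (F *v xs))"
    unfolding saddle_gap_def Psaddle_def sum_distrib_right sum_subtractf[symmetric] sum.distrib[symmetric]
    by (simp add: algebra_simps)
  ultimately show ?thesis unfolding saddle_gap_def Psaddle_def a(2) by simp
qed

lemma loss_diff_le:
  assumes "xk \<in> X" "x1 \<in> X" "z \<in> X"
  shows "l x1 - l z \<le> inner (gl xk) (x1 - z) + L / 2 * (norm (x1 - xk))\<^sup>2"
  using lipschitz_gradient_upper_bound[OF l_gradient gl_lipschitz convex_X assms(1,2)]
    convex_on_gradient_lower_bound[OF l_gradient l_convex convex_X assms(1,3)]
  by (simp add: inner_diff_right)

text \<open>The Young parameter \<open>r\<close> absorbs both the gradient error \<open>g - gl xk\<close> and the coupling term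
  \<open>F *v (x1 - xk)\<close>.\<close>
lemma saddle_gap_step:
  assumes s: "0 < s" and r: "0 < r" and xk: "xk \<in> X"
    and y1: "y1 = closest_point Y (yk + s *\<^sub>R (F *v xk))"
    and x1: "x1 = closest_point X (xk - (1 / (r + L)) *\<^sub>R (g + transpose F *v y1))"
  shows "saddle_gap x1 y1 \<le>
      (r + L) / 2 * ((norm (xk - xs))\<^sup>2 - (norm (x1 - xs))\<^sup>2)
      + ((norm (ys - yk))\<^sup>2 - (norm (ys - y1))\<^sup>2) / (2 * s)
      + ((norm (g - gl xk))\<^sup>2 + lambda_max (transpose F ** F) * (diameter Y)\<^sup>2) / r
      - inner (g - gl xk) (xk - xs)"
proof -
  define \<Delta> where "\<Delta> = x1 - xk"
  define \<delta> where "\<delta> = g - gl xk"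
  define lam where "lam = lambda_max (transpose F ** F)"
  have rL: "r + L > 0" using r L_nonneg by simp
  have x1X: "x1 \<in> X" and y1Y: "y1 \<in> Y"
    unfolding x1 y1 using closest_point_in_set closed_X closed_Y xk ys_in_Y by blast+
  have "2 * ((1 / (r + L)) * inner (g + transpose F *v y1) (x1 - xs))
      \<le> (norm (xk - xs))\<^sup>2 - (norm (x1 - xs))\<^sup>2 - (norm \<Delta>)\<^sup>2"
    using closest_point_three_point[OF convex_X closed_X xs_in_X, of "(1 / (r + L)) *\<^sub>R (g + transpose F *v y1)" xk]
    unfolding x1[symmetric] \<Delta>_def[symmetric] inner_scaleR_left .
  then have x_proj: "inner (g + transpose F *v y1) (x1 - xs)
      \<le> (r + L) / 2 * ((norm (xk - xs))\<^sup>2 - (norm (x1 - xs))\<^sup>2)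
         - r * (norm \<Delta>)\<^sup>2 / 4 - r * (norm \<Delta>)\<^sup>2 / 4 - L / 2 * (norm \<Delta>)\<^sup>2"
    using rL by (simp add: field_simps)
  have y_proj: "inner (ys - y1) (F *v xk) \<le> ((norm (ys - yk))\<^sup>2 - (norm (ys - y1))\<^sup>2) / (2 * s)"
    unfolding y1 by (rule closest_point_ascent_inner[OF convex_Y closed_Y ys_in_Y s])
  have loss: "l x1 - l xs \<le> inner (gl xk) (x1 - xs) + L / 2 * (norm \<Delta>)\<^sup>2"
    unfolding \<Delta>_def by (rule loss_diff_le[OF xk x1X xs_in_X])
  have young_noise: "- inner \<delta> \<Delta> \<le> (norm \<delta>)\<^sup>2 / r + r * (norm \<Delta>)\<^sup>2 / 4"
    using inner_le_weighted_sum[OF r, of "- \<delta>" \<Delta>] by simp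
  have young_coupling: "inner (ys - y1) (F *v \<Delta>) \<le> lam * (diameter Y)\<^sup>2 / r + r * (norm \<Delta>)\<^sup>2 / 4"
    unfolding lam_def using diameter_bounded_bound[OF compact_imp_bounded[OF compact_Y] ys_in_Y y1Y]
    by (intro inner_matrix_vector_le_weighted_sum r) (simp add: dist_norm)
  have "saddle_gap x1 y1 = l x1 - l xs + inner (ys - y1) (F *v xk) + inner (ys - y1) (F *v \<Delta>)
      + inner (g + transpose F *v y1) (x1 - xs) - inner (gl xk) (x1 - xs) - inner \<delta> (xk - xs) - inner \<delta> \<Delta>"
    unfolding saddle_gap_def Psaddle_def \<Delta>_def \<delta>_def
    by (simp add: inner_add_left inner_diff_left inner_diff_right dot_lmul_matrix
        matrix_vector_mult_diff_distrib algebra_simps)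
  moreover have "((norm \<delta>)\<^sup>2 + lam * (diameter Y)\<^sup>2) / r = (norm \<delta>)\<^sup>2 / r + lam * (diameter Y)\<^sup>2 / r"
    by (rule add_divide_distrib)
  ultimately show ?thesis
    using x_proj y_proj loss young_noise young_coupling unfolding \<delta>_def[symmetric] lam_def[symmetric]
    by linarith
qed

lemma saddle_gap_sum_le:
  fixes x g :: "nat \<Rightarrow> real^'n" and y :: "nat \<Rightarrow> real^'m" and r :: "nat \<Rightarrow> real"
  assumes s: "0 < s" and r: "\<And>k. 0 < r k" "mono r"
    and init: "x 0 \<in> X" "y 0 \<in> Y"
    and y_step: "\<And>k. y (Suc k) = closest_point Y (y k + s *\<^sub>R (F *v x k))"
    and x_step: "\<And>k. x (Suc k) = closest_point X (x k - (1 / (r k + L)) *\<^sub>R (g k + transpose F *v y (Suc k)))"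
  shows "(\<Sum>k\<le>t. saddle_gap (x (Suc k)) (y (Suc k)))
    \<le> (r t + L) / 2 * (diameter X)\<^sup>2 + (diameter Y)\<^sup>2 / (2 * s)
        + (\<Sum>k\<le>t. ((norm (g k - gl (x k)))\<^sup>2 + lambda_max (transpose F ** F) * (diameter Y)\<^sup>2) / r k
                   - inner (g k - gl (x k)) (x k - xs))"
proof -
  define a where "a = (\<lambda>k. (norm (x k - xs))\<^sup>2)"
  define b where "b = (\<lambda>k. (norm (ys - y k))\<^sup>2)"
  define c where "c = (\<lambda>k. (r k + L) / 2)"
  define e where "e = (\<lambda>k. ((norm (g k - gl (x k)))\<^sup>2 + lambda_max (transpose F ** F) * (diameter Y)\<^sup>2) / r k
                            - inner (g k - gl (x k)) (x k - xs))"
  have xX: "x k \<in> X" for k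
    by (cases k) (use init x_step closest_point_in_set[OF closed_X] xs_in_X in auto)
  have yY: "y k \<in> Y" for k
    by (cases k) (use init y_step closest_point_in_set[OF closed_Y] ys_in_Y in auto)
  have "saddle_gap (x (Suc k)) (y (Suc k)) \<le> c k * (a k - a (Suc k)) + (b k - b (Suc k)) / (2 * s) + e k" for k
    using saddle_gap_step[OF s r(1)[of k] xX[of k] y_step[of k] x_step[of k]]
    unfolding a_def b_def c_def e_def by linarith
  then have "(\<Sum>k\<le>t. saddle_gap (x (Suc k)) (y (Suc k)))
      \<le> (\<Sum>k\<le>t. c k * (a k - a (Suc k)) + (b k - b (Suc k)) / (2 * s) + e k)"
    by (rule sum_mono)
  also have "\<dots> = (\<Sum>k\<le>t. c k * (a k - a (Suc k))) + (\<Sum>k\<le>t. b k - b (Suc k)) / (2 * s) + (\<Sum>k\<le>t. e k)"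
    by (simp add: sum.distrib sum_divide_distrib)
  also have "(\<Sum>k\<le>t. b k - b (Suc k)) = b 0 - b (Suc t)" by (rule sum_telescope)
  finally have "(\<Sum>k\<le>t. saddle_gap (x (Suc k)) (y (Suc k)))
      \<le> (\<Sum>k\<le>t. c k * (a k - a (Suc k))) + (b 0 - b (Suc t)) / (2 * s) + (\<Sum>k\<le>t. e k)" .
  moreover have "(\<Sum>k\<le>t. c k * (a k - a (Suc k))) \<le> c t * (diameter X)\<^sup>2"
  proof (rule telescope_weighted_bound)
    show "mono c" using r(2) unfolding c_def mono_def by (simp add: divide_right_mono)
    show "0 \<le> c k" for k using r(1)[of k] L_nonneg unfolding c_def by simp
    show "a k \<le> (diameter X)\<^sup>2" for k
      using diameter_bounded_bound[OF compact_imp_bounded[OF compact_X] xX[of k] xs_in_X]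
      unfolding a_def by (simp add: dist_norm power_mono)
  qed (simp add: a_def)
  moreover have "b 0 - b (Suc t) \<le> (diameter Y)\<^sup>2"
  proof -
    have "b 0 \<le> (diameter Y)\<^sup>2"
      using diameter_bounded_bound[OF compact_imp_bounded[OF compact_Y] ys_in_Y yY[of 0]]
      unfolding b_def by (simp add: dist_norm power_mono)
    then show ?thesis unfolding b_def using zero_le_power2[of "norm (ys - y (Suc t))"] by linarith
  qed
  ultimately show ?thesis
    using divide_right_mono[of "b 0 - b (Suc t)" "(diameter Y)\<^sup>2" "2 * s"] s
    unfolding c_def e_def by simp
qed

lemma saddle_gap_average_le:
  fixes x g :: "nat \<Rightarrow> real^'n" and y :: "nat \<Rightarrow> real^'m" and r :: "nat \<Rightarrow> real"
  assumes s: "0 < s" and r: "\<And>k. 0 < r k" "mono r"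
    and init: "x 0 \<in> X" "y 0 \<in> Y"
    and y_step: "\<And>k. y (Suc k) = closest_point Y (y k + s *\<^sub>R (F *v x k))"
    and x_step: "\<And>k. x (Suc k) = closest_point X (x k - (1 / (r k + L)) *\<^sub>R (g k + transpose F *v y (Suc k)))"
  shows "saddle_gap (\<Sum>k\<le>t. (1 / real (t + 1)) *\<^sub>R x (Suc k)) (\<Sum>k\<le>t. (1 / real (t + 1)) *\<^sub>R y (Suc k))
    \<le> ((r t + L) / 2 * (diameter X)\<^sup>2 + (diameter Y)\<^sup>2 / (2 * s)
        + (\<Sum>k\<le>t. ((norm (g k - gl (x k)))\<^sup>2 + lambda_max (transpose F ** F) * (diameter Y)\<^sup>2) / r k
                   - inner (g k - gl (x k)) (x k - xs))) / real (t + 1)"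
proof -
  have "saddle_gap (\<Sum>k\<le>t. (1 / real (t + 1)) *\<^sub>R x (Suc k)) (\<Sum>k\<le>t. (1 / real (t + 1)) *\<^sub>R y (Suc k))
      \<le> (\<Sum>k\<le>t. 1 / real (t + 1) * saddle_gap (x (Suc k)) (y (Suc k)))"
    unfolding x_step using closest_point_in_set[OF closed_X] xs_in_X
    by (intro saddle_gap_convex_combination) auto
  also have "\<dots> = (\<Sum>k\<le>t. saddle_gap (x (Suc k)) (y (Suc k))) / real (t + 1)"
    by (simp add: sum_divide_distrib)
  finally show ?thesis
    using saddle_gap_sum_le[OF assms] by (meson divide_right_mono of_nat_0_le_iff order_trans)
qed

lemma saddle_gap_bounded: obtains B where "\<And>x y. x \<in> X \<Longrightarrow> y \<in> Y \<Longrightarrow> \<bar>saddle_gap x y\<bar> \<le> B"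
proof -
  have "continuous_on UNIV (\<lambda>v. F *v v)" by (intro continuous_intros)
  then have "continuous_on (X \<times> Y) (\<lambda>p. F *v fst p)"
    by (rule continuous_on_compose2[OF _ continuous_on_fst[OF continuous_on_id]]) auto
  moreover have "continuous_on (X \<times> Y) (\<lambda>p. l (fst p))"
    by (rule continuous_on_compose2[OF l_continuous continuous_on_fst[OF continuous_on_id]]) auto
  ultimately have "continuous_on (X \<times> Y) (\<lambda>p. saddle_gap (fst p) (snd p))"
    unfolding saddle_gap_def Psaddle_def by (intro continuous_intros)
  then have "bounded ((\<lambda>p. saddle_gap (fst p) (snd p)) ` (X \<times> Y))"
    using compact_X compact_Y by (intro compact_imp_bounded compact_continuous_image compact_Times)
  then show ?thesis using that unfolding bounded_iff by fastforce
qed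

lemma saddle_gap_measurable:
  assumes "u \<in> borel_measurable N" "v \<in> borel_measurable N" "\<And>\<omega>. \<omega> \<in> space N \<Longrightarrow> u \<omega> \<in> X"
  shows "(\<lambda>\<omega>. saddle_gap (u \<omega>) (v \<omega>)) \<in> borel_measurable N"
proof -
  have "(\<lambda>\<omega>. l (u \<omega>)) \<in> borel_measurable N"
    using l_continuous closed_X assms(1,3) by (rule borel_measurable_continuous_on_comp)
  moreover have [measurable]: "(\<lambda>v. F *v v) \<in> borel_measurable borel"
    by (rule borel_measurable_continuous_onI) (intro continuous_intros)
  ultimately show ?thesis unfolding saddle_gap_def Psaddle_def using assms(1,2) by measurable
qed

end

section \<open>Stochastic primal-dual hybrid gradient\<close>

locale spdhg = smooth_saddle_problem X Y F l gl L xs ys + prob_space M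
  for X :: "(real^'n) set" and Y :: "(real^'m) set" and F l gl L xs ys and M :: "'w measure" +
  fixes s \<sigma> :: real and D :: "'e measure" and G :: "real^'n \<Rightarrow> 'e \<Rightarrow> real^'n"
    and \<xi> :: "nat \<Rightarrow> 'w \<Rightarrow> 'e" and x :: "nat \<Rightarrow> 'w \<Rightarrow> real^'n" and y :: "nat \<Rightarrow> 'w \<Rightarrow> real^'m"
    and x0 :: "real^'n" and y0 :: "real^'m"
  assumes s_pos: "0 < s"
    and gl_continuous: "continuous_on X gl"
    and G_measurable: "(\<lambda>(z, e). G z e) \<in> borel_measurable (borel \<Otimes>\<^sub>M D)"
    and G_unbiased: "\<And>z. z \<in> X \<Longrightarrow> integrable D (G z) \<and> (\<integral>e. G z e \<partial>D) = gl z"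
    and G_variance: "\<And>z. z \<in> X \<Longrightarrow> integrable D (\<lambda>e. (norm (G z e - gl z))\<^sup>2)
                                   \<and> (\<integral>e. (norm (G z e - gl z))\<^sup>2 \<partial>D) \<le> \<sigma>\<^sup>2"
    and \<xi>_indep: "indep_vars (\<lambda>_. D) \<xi> UNIV"
    and \<xi>_distr: "\<And>k. distr M D (\<xi> k) = D"
    and init: "x0 \<in> X" "y0 \<in> Y" "\<And>\<omega>. x 0 \<omega> = x0" "\<And>\<omega>. y 0 \<omega> = y0"
    and y_step: "\<And>k \<omega>. y (Suc k) \<omega> \<in> Y \<and>
        (\<forall>v\<in>Y. Psaddle l F v (x k \<omega>) - (norm (v - y k \<omega>))\<^sup>2 / (2 * s)
               \<le> Psaddle l F (y (Suc k) \<omega>) (x k \<omega>) - (norm (y (Suc k) \<omega> - y k \<omega>))\<^sup>2 / (2 * s))"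
    and x_step: "\<And>k \<omega>. x (Suc k) \<omega> = closest_point X
        (x k \<omega> - (1 / (sqrt (real (k + 1)) + L)) *\<^sub>R (G (x k \<omega>) (\<xi> (Suc k) \<omega>) + transpose F *v y (Suc k) \<omega>))"
begin

lemma y_step_closest_point: "y (Suc k) \<omega> = closest_point Y (y k \<omega> + s *\<^sub>R (F *v x k \<omega>))"
proof (rule prox_maximizer_eq_closest_point[OF convex_Y closed_Y _ s_pos])
  show "y (Suc k) \<omega> \<in> Y" using y_step by blast
  show "inner v (F *v x k \<omega>) - (norm (v - y k \<omega>))\<^sup>2 / (2 * s)
      \<le> inner (y (Suc k) \<omega>) (F *v x k \<omega>) - (norm (y (Suc k) \<omega> - y k \<omega>))\<^sup>2 / (2 * s)" if "v \<in> Y" for v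
    using y_step[of k \<omega>] that unfolding Psaddle_def by auto
qed

definition spdhg_update :: "nat \<Rightarrow> (real^'n) \<times> (real^'m) \<Rightarrow> 'e \<Rightarrow> (real^'n) \<times> (real^'m)" where
  "spdhg_update k p e =
     (let y' = closest_point Y (snd p + s *\<^sub>R (F *v fst p))
      in (closest_point X (fst p - (1 / (sqrt (real (k + 1)) + L)) *\<^sub>R (G (fst p) e + transpose F *v y')), y'))"

lemma iterates_eq_iterate_samples:
  "(x k \<omega>, y k \<omega>) = iterate_samples spdhg_update (x0, y0) k (restrict (\<lambda>i. \<xi> i \<omega>) {..k})"
proof -
  have "(x k \<omega>, y k \<omega>) = iterate_samples spdhg_update (x0, y0) k (\<lambda>i. \<xi> i \<omega>)"
  proof (induction k)
    case (Suc k)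
    have "(x (Suc k) \<omega>, y (Suc k) \<omega>) = spdhg_update k (x k \<omega>, y k \<omega>) (\<xi> (Suc k) \<omega>)"
      unfolding spdhg_update_def Let_def using x_step y_step_closest_point by simp
    with Suc show ?case by simp
  qed (simp add: init)
  also have "\<dots> = iterate_samples spdhg_update (x0, y0) k (restrict (\<lambda>i. \<xi> i \<omega>) {..k})"
    by (rule iterate_samples_cong) simp
  finally show ?thesis .
qed

lemma x_in_X: "x k \<omega> \<in> X"
proof (cases k)
  case (Suc j)
  show ?thesis unfolding Suc x_step by (rule closest_point_in_set[OF closed_X]) (use xs_in_X in auto)
qed (simp add: init)

lemma y_in_Y: "y k \<omega> \<in> Y"
  by (cases k) (simp_all add: init y_step)

lemma measurable_spdhg_state:
  "iterate_samples spdhg_update (x0, y0) k \<in> measurable (PiM {..k} (\<lambda>_. D)) (borel \<Otimes>\<^sub>M borel)"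
proof (rule measurable_iterate_samples)
  have [measurable]: "closest_point X \<in> borel_measurable borel" "closest_point Y \<in> borel_measurable borel"
    using continuous_on_closest_point convex_X closed_X convex_Y closed_Y xs_in_X ys_in_Y
    by (auto intro!: borel_measurable_continuous_onI)
  have [measurable]: "(\<lambda>v. F *v v) \<in> borel_measurable borel"
    by (rule borel_measurable_continuous_onI) (intro continuous_intros)
  have [measurable]: "(\<lambda>v. transpose F *v v) \<in> borel_measurable borel"
    by (rule borel_measurable_continuous_onI) (intro continuous_intros)
  have "(\<lambda>q. (fst (fst q), snd q)) \<in> measurable ((borel \<Otimes>\<^sub>M borel) \<Otimes>\<^sub>M D) (borel \<Otimes>\<^sub>M D)"
    by measurable
  from measurable_compose[OF this G_measurable]
  have [measurable]: "(\<lambda>q. G (fst (fst q)) (snd q)) \<in> borel_measurable ((borel \<Otimes>\<^sub>M borel) \<Otimes>\<^sub>M D)"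
    by simp
  show "(\<lambda>(p, e). spdhg_update k p e) \<in> measurable ((borel \<Otimes>\<^sub>M borel) \<Otimes>\<^sub>M D) (borel \<Otimes>\<^sub>M borel)" for k
    unfolding spdhg_update_def Let_def case_prod_beta' by measurable
qed (simp add: space_pair_measure)

lemma spdhg_state_in_X: "fst (iterate_samples spdhg_update (x0, y0) k z) \<in> X"
proof (cases k)
  case (Suc j)
  show ?thesis unfolding Suc
    by (simp add: spdhg_update_def Let_def) (rule closest_point_in_set[OF closed_X], use xs_in_X in auto)
qed (simp add: init)

lemma x_measurable: "x k \<in> borel_measurable M" and y_measurable: "y k \<in> borel_measurable M"
proof -
  have "(\<lambda>\<omega>. restrict (\<lambda>i. \<xi> i \<omega>) {..k}) \<in> measurable M (PiM {..k} (\<lambda>_. D))"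
    using \<xi>_indep unfolding indep_vars_def by (intro measurable_restrict) auto
  from measurable_compose[OF this measurable_spdhg_state]
  have "(\<lambda>\<omega>. (x k \<omega>, y k \<omega>)) \<in> measurable M (borel \<Otimes>\<^sub>M borel)"
    unfolding iterates_eq_iterate_samples by simp
  then show "x k \<in> borel_measurable M" "y k \<in> borel_measurable M"
    using measurable_fst'' measurable_snd'' by fastforce+
qed

definition gradient_noise :: "nat \<Rightarrow> 'w \<Rightarrow> real^'n" where
  "gradient_noise k \<omega> = G (x k \<omega>) (\<xi> (Suc k) \<omega>) - gl (x k \<omega>)"

text \<open>The iterate \<open>x k\<close> is a measurable function of \<open>\<xi> 1, \<dots>, \<xi> k\<close>, hence independent of the
  fresh sample \<open>\<xi> (Suc k)\<close>.\<close>
lemma gradient_noise_moments_iterates: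
  shows "integrable M (\<lambda>\<omega>. (norm (gradient_noise k \<omega>))\<^sup>2)"
    and "(\<integral>\<omega>. (norm (gradient_noise k \<omega>))\<^sup>2 \<partial>M) \<le> \<sigma>\<^sup>2"
    and "integrable M (\<lambda>\<omega>. inner (gradient_noise k \<omega>) (x k \<omega> - xs))"
    and "(\<integral>\<omega>. inner (gradient_noise k \<omega>) (x k \<omega> - xs) \<partial>M) = 0"
proof -
  let ?N = "PiM {..k} (\<lambda>_. D)" and ?Z = "\<lambda>\<omega>. restrict (\<lambda>i. \<xi> i \<omega>) {..k}"
  let ?\<phi> = "\<lambda>z. fst (iterate_samples spdhg_update (x0, y0) k z)"
  have Z: "?Z \<in> measurable M ?N" and W: "\<xi> (Suc k) \<in> measurable M D"
    using \<xi>_indep unfolding indep_vars_def by (auto intro: measurable_restrict)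
  have D: "prob_space D" using prob_space_distr[OF W] \<xi>_distr by simp
  have \<phi>: "?\<phi> \<in> borel_measurable ?N" using measurable_spdhg_state by measurable
  have x_eq: "x k \<omega> = ?\<phi> (?Z \<omega>)" for \<omega>
    using iterates_eq_iterate_samples[of k \<omega>] by (metis fst_conv)
  note moments = gradient_noise_moments[OF Z W D distr_past_fresh_sample[OF \<xi>_indep \<xi>_distr]
      \<phi> spdhg_state_in_X compact_imp_bounded[OF compact_X] closed_X gl_continuous G_measurable
      G_unbiased G_variance]
  show "integrable M (\<lambda>\<omega>. (norm (gradient_noise k \<omega>))\<^sup>2)"
    "(\<integral>\<omega>. (norm (gradient_noise k \<omega>))\<^sup>2 \<partial>M) \<le> \<sigma>\<^sup>2"
    "integrable M (\<lambda>\<omega>. inner (gradient_noise k \<omega>) (x k \<omega> - xs))"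
    "(\<integral>\<omega>. inner (gradient_noise k \<omega>) (x k \<omega> - xs) \<partial>M) = 0"
    using moments(1,2) moments(3,4)[of xs] unfolding gradient_noise_def x_eq by simp_all
qed

definition x_avg :: "nat \<Rightarrow> 'w \<Rightarrow> real^'n" where
  "x_avg t \<omega> = (\<Sum>k\<le>t. (1 / real (t + 1)) *\<^sub>R x (Suc k) \<omega>)"

definition y_avg :: "nat \<Rightarrow> 'w \<Rightarrow> real^'m" where
  "y_avg t \<omega> = (\<Sum>k\<le>t. (1 / real (t + 1)) *\<^sub>R y (Suc k) \<omega>)"

lemma x_avg_in_X: "x_avg t \<omega> \<in> X" and y_avg_in_Y: "y_avg t \<omega> \<in> Y"
  unfolding x_avg_def y_avg_def using x_in_X y_in_Y
  by (auto intro!: convex_sum[OF _ convex_X] convex_sum[OF _ convex_Y])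

lemma integrable_saddle_gap_avg: "integrable M (\<lambda>\<omega>. saddle_gap (x_avg t \<omega>) (y_avg t \<omega>))"
proof -
  obtain B where B: "\<And>u v. u \<in> X \<Longrightarrow> v \<in> Y \<Longrightarrow> \<bar>saddle_gap u v\<bar> \<le> B"
    using saddle_gap_bounded by blast
  have "(\<lambda>\<omega>. saddle_gap (x_avg t \<omega>) (y_avg t \<omega>)) \<in> borel_measurable M"
    using x_avg_in_X x_measurable y_measurable
    by (intro saddle_gap_measurable) (auto simp: x_avg_def y_avg_def)
  then show ?thesis
    using B x_avg_in_X y_avg_in_Y by (intro integrable_const_bound[where B = B]) auto
qed

lemma saddle_gap_avg_le:
  "saddle_gap (x_avg t \<omega>) (y_avg t \<omega>)
     \<le> ((sqrt (real (t + 1)) + L) / 2 * (diameter X)\<^sup>2 + (diameter Y)\<^sup>2 / (2 * s)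
         + (\<Sum>k\<le>t. ((norm (gradient_noise k \<omega>))\<^sup>2 + lambda_max (transpose F ** F) * (diameter Y)\<^sup>2)
                    / sqrt (real (k + 1)) - inner (gradient_noise k \<omega>) (x k \<omega> - xs))) / real (t + 1)"
  using saddle_gap_average_le[where s = s and t = t and x = "\<lambda>k. x k \<omega>" and y = "\<lambda>k. y k \<omega>"
      and g = "\<lambda>k. G (x k \<omega>) (\<xi> (Suc k) \<omega>)" and r = "\<lambda>k. sqrt (real (k + 1))"]
  unfolding x_avg_def y_avg_def gradient_noise_def
  by (simp add: mono_def s_pos x_in_X y_in_Y y_step_closest_point x_step)

lemma expected_saddle_gap_avg_le:
  "(\<integral>\<omega>. saddle_gap (x_avg t \<omega>) (y_avg t \<omega>) \<partial>M)
     \<le> ((sqrt (real (t + 1)) + L) / 2 * (diameter X)\<^sup>2 + (diameter Y)\<^sup>2 / (2 * s)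
         + (lambda_max (transpose F ** F) * (diameter Y)\<^sup>2 + \<sigma>\<^sup>2) * (2 * sqrt (real (t + 1)))) / real (t + 1)"
proof -
  define c where "c = lambda_max (transpose F ** F) * (diameter Y)\<^sup>2"
  define K where "K = (sqrt (real (t + 1)) + L) / 2 * (diameter X)\<^sup>2 + (diameter Y)\<^sup>2 / (2 * s)"
  note noise = gradient_noise_moments_iterates
  have "(\<integral>\<omega>. saddle_gap (x_avg t \<omega>) (y_avg t \<omega>) \<partial>M)
      \<le> (\<integral>\<omega>. (K + (\<Sum>k\<le>t. ((norm (gradient_noise k \<omega>))\<^sup>2 + c) / sqrt (real (k + 1))
                            - inner (gradient_noise k \<omega>) (x k \<omega> - xs))) / real (t + 1) \<partial>M)"
    using integrable_saddle_gap_avg saddle_gap_avg_le noise(1,3) unfolding K_def c_def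
    by (intro integral_mono) auto
  also have "\<dots> = (K + (\<Sum>k\<le>t. ((\<integral>\<omega>. (norm (gradient_noise k \<omega>))\<^sup>2 \<partial>M) + c) / sqrt (real (k + 1))
                           - (\<integral>\<omega>. inner (gradient_noise k \<omega>) (x k \<omega> - xs) \<partial>M))) / real (t + 1)"
    using noise(1,3) by (simp add: integral_sum prob_space add_divide_distrib)
  also have "\<dots> \<le> (K + (c + \<sigma>\<^sup>2) * (2 * sqrt (real (t + 1)))) / real (t + 1)"
  proof -
    have "(\<Sum>k\<le>t. ((\<integral>\<omega>. (norm (gradient_noise k \<omega>))\<^sup>2 \<partial>M) + c) / sqrt (real (k + 1))
                 - (\<integral>\<omega>. inner (gradient_noise k \<omega>) (x k \<omega> - xs) \<partial>M))
        \<le> (\<Sum>k\<le>t. (c + \<sigma>\<^sup>2) * (1 / sqrt (real (k + 1))))"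
      using noise(2,4) by (intro sum_mono) (simp add: divide_right_mono)
    also have "\<dots> \<le> (c + \<sigma>\<^sup>2) * (2 * sqrt (real (t + 1)))"
      unfolding sum_distrib_left[symmetric] c_def using sum_inverse_sqrt_le
      by (intro mult_left_mono add_nonneg_nonneg mult_nonneg_nonneg lambda_max_gram_nonneg) auto
    finally show ?thesis by (simp add: divide_right_mono)
  qed
  finally show ?thesis unfolding K_def c_def .
qed

end

theorem theorem1:
  fixes X :: "(real^'n) set" and Y :: "(real^'m) set"
    and F :: "real^'n^'m"
    and l :: "real^'n \<Rightarrow> real" and gl :: "real^'n \<Rightarrow> real^'n"
    and L s \<sigma> :: real
    and D :: "'e measure" and G :: "real^'n \<Rightarrow> 'e \<Rightarrow> real^'n"
    and M :: "'w measure" and \<xi> :: "nat \<Rightarrow> 'w \<Rightarrow> 'e"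
    and x :: "nat \<Rightarrow> 'w \<Rightarrow> real^'n" and y :: "nat \<Rightarrow> 'w \<Rightarrow> real^'m"
    and x0 :: "real^'n" and y0 :: "real^'m"
    and xs :: "real^'n" and ys :: "real^'m"
    and t :: nat
  assumes X: "X \<noteq> {}" "convex X" "compact X"
    and Y: "Y \<noteq> {}" "convex Y" "compact Y"
    and l_convex: "convex_on X l"
    and l_grad: "\<forall>z\<in>X. (l has_derivative (\<lambda>h. inner (gl z) h)) (at z within X)"
    and gl_cont: "continuous_on X gl"
    and L: "L \<ge> 0" "\<forall>z1\<in>X. \<forall>z2\<in>X. norm (gl z1 - gl z2) \<le> L * norm (z1 - z2)"
    and s: "s > 0"
    and \<sigma>: "\<sigma> > 0"
    and D: "prob_space D"
    and G_meas: "(\<lambda>(z, e). G z e) \<in> borel_measurable (borel \<Otimes>\<^sub>M D)"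
    and G_unbiased: "\<forall>z\<in>X. integrable D (G z) \<and> (\<integral>e. G z e \<partial>D) = gl z"
    and G_var: "\<forall>z\<in>X. integrable D (\<lambda>e. (norm (G z e - gl z))\<^sup>2) \<and>
                   (\<integral>e. (norm (G z e - gl z))\<^sup>2 \<partial>D) \<le> \<sigma>\<^sup>2"
    and G_subgauss: "\<forall>z\<in>X. integrable D (\<lambda>e. exp ((norm (G z e - gl z))\<^sup>2 / \<sigma>\<^sup>2)) \<and>
                   (\<integral>e. exp ((norm (G z e - gl z))\<^sup>2 / \<sigma>\<^sup>2) \<partial>D) \<le> exp 1"
    and M: "prob_space M"
    and \<xi>_indep: "prob_space.indep_vars M (\<lambda>_. D) \<xi> UNIV"
    and \<xi>_distr: "\<forall>k. distr M D (\<xi> k) = D"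
    and init: "x0 \<in> X" "y0 \<in> Y" "\<forall>\<omega>. x 0 \<omega> = x0" "\<forall>\<omega>. y 0 \<omega> = y0"
    and y_step: "\<forall>k \<omega>. y (Suc k) \<omega> \<in> Y \<and>
        (\<forall>v\<in>Y. Psaddle l F v (x k \<omega>) - (norm (v - y k \<omega>))\<^sup>2 / (2 * s)
               \<le> Psaddle l F (y (Suc k) \<omega>) (x k \<omega>) - (norm (y (Suc k) \<omega> - y k \<omega>))\<^sup>2 / (2 * s))"
    and x_step: "\<forall>k \<omega>. x (Suc k) \<omega> = closest_point X
        (x k \<omega> - (1 / (sqrt (real (k + 1)) + L)) *\<^sub>R
                   (G (x k \<omega>) (\<xi> (Suc k) \<omega>) + transpose F *v y (Suc k) \<omega>))"
    and saddle: "is_saddle_point Y X (Psaddle l F) ys xs"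
  shows "let xbar = (\<lambda>\<omega>. \<Sum>k\<le>t. (1 / real (t + 1)) *\<^sub>R x (Suc k) \<omega>);
             ybar = (\<lambda>\<omega>. \<Sum>k\<le>t. (1 / real (t + 1)) *\<^sub>R y (Suc k) \<omega>);
             gap = (\<lambda>\<omega>. Psaddle l F ys (xbar \<omega>) - Psaddle l F (ybar \<omega>) xs)
         in integrable M gap \<and>
            0 \<le> (\<integral>\<omega>. gap \<omega> \<partial>M) \<and>
            (\<integral>\<omega>. gap \<omega> \<partial>M) \<le>
               (diameter Y)\<^sup>2 / (2 * s * real (t + 1)) + L * (diameter X)\<^sup>2 / (2 * real (t + 1))
               + ((diameter X)\<^sup>2 + 2 * lambda_max (transpose F ** F) * (diameter Y)\<^sup>2 + 2 * \<sigma>\<^sup>2)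
                 / sqrt (real (t + 1))"
proof -
  interpret spdhg X Y F l gl L xs ys M s \<sigma> D G \<xi> x y x0 y0
    by (rule spdhg.intro[OF smooth_saddle_problem.intro M spdhg_axioms.intro]) (use assms in auto)
  have "(\<integral>\<omega>. saddle_gap (x_avg t \<omega>) (y_avg t \<omega>) \<partial>M)
      \<le> (diameter Y)\<^sup>2 / (2 * s * real (t + 1)) + L * (diameter X)\<^sup>2 / (2 * real (t + 1))
        + ((diameter X)\<^sup>2 + 2 * (lambda_max (transpose F ** F) * (diameter Y)\<^sup>2 + \<sigma>\<^sup>2))
          / sqrt (real (t + 1))"
    using expected_saddle_gap_avg_le sqrt_rate_simplify[OF zero_le_power2 s] by (rule order_trans)
  moreover have "0 \<le> (\<integral>\<omega>. saddle_gap (x_avg t \<omega>) (y_avg t \<omega>) \<partial>M)"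
    using saddle_gap_nonneg[OF x_avg_in_X y_avg_in_Y] by simp
  ultimately show ?thesis
    using integrable_saddle_gap_avg[of t]
    unfolding Let_def saddle_gap_def x_avg_def y_avg_def by (simp add: algebra_simps)
qed

end
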